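(* There exists a connected graphon $W$ with $h_W=0$. Moreover $W$ can be chosen $\{0,1\}$-valued such that $W^{-1}(1)$ contains an open subset of $(0,1)^2$ containing the diagonal $\{(x,x):0<x<1\}$.
   Context: Let $I=[0,1]$ with Lebesgue measure $\mu_L$. A graphon is a measurable function $W:I^2\to I$ with $W(x,y)=W(y,x)$. For measurable $A,B\subseteq I$ put $e_W(A,B)=\int_{A\times B}W$ and $\mathrm{vol}_W(A)=e_W(A,I)$. $W$ is connected if $e_W(A,A^c)\neq0$ for every measurable $A$ with $0<\mu_L(A)<1$. The Cheeger constant is $h_W=\inf_{A:\,0<\mu_L(A)<1}\frac{e_W(A,A^c)}{\min\{\mathrm{vol}_W(A),\mathrm{vol}_W(A^c)\}}$. *)

theory Defs
  imports "HOL-Analysis.Analysis"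
begin

text \<open>A graphon is represented by a
  curried function W :: real => real => real; only its values on I x I matter.\<close>

definition unit_I :: "real set" where
  "unit_I = {0..1}"

definition graphon :: "(real \<Rightarrow> real \<Rightarrow> real) \<Rightarrow> bool" where
  "graphon W \<longleftrightarrow>
     (\<lambda>p. W (fst p) (snd p)) \<in> borel_measurable (restrict_space (lebesgue \<Otimes>\<^sub>M lebesgue) (unit_I \<times> unit_I))
   \<and> (\<forall>x\<in>unit_I. \<forall>y\<in>unit_I. W x y \<in> unit_I \<and> W x y = W y x)"

definition graphon_e :: "(real \<Rightarrow> real \<Rightarrow> real) \<Rightarrow> real set \<Rightarrow> real set \<Rightarrow> real" where
  "graphon_e W A B = (LINT p : A \<times> B | (lebesgue \<Otimes>\<^sub>M lebesgue). W (fst p) (snd p))"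

definition graphon_vol :: "(real \<Rightarrow> real \<Rightarrow> real) \<Rightarrow> real set \<Rightarrow> real" where
  "graphon_vol W A = graphon_e W A unit_I"

definition proper_subset_I :: "real set \<Rightarrow> bool" where
  "proper_subset_I A \<longleftrightarrow> A \<in> sets lebesgue \<and> A \<subseteq> unit_I
      \<and> 0 < measure lebesgue A \<and> measure lebesgue A < 1"

definition graphon_connected :: "(real \<Rightarrow> real \<Rightarrow> real) \<Rightarrow> bool" where
  "graphon_connected W \<longleftrightarrow>
     (\<forall>A. proper_subset_I A \<longrightarrow> graphon_e W A (unit_I - A) \<noteq> 0)"

definition cheeger :: "(real \<Rightarrow> real \<Rightarrow> real) \<Rightarrow> real" where
  "cheeger W = Inf {graphon_e W A (unit_I - A) /
        min (graphon_vol W A) (graphon_vol W (unit_I - A)) | A. proper_subset_I A}"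

end

theory Submission imports Defs begin

text \<open>The graphon is the indicator of the chain of open squares \<open>J\<^sub>n \<times> J\<^sub>n\<close> with
  \<open>J\<^sub>n = (2\<^sup>-\<^sup>n\<^sup>-\<^sup>1, 2\<^sup>-\<^sup>n + 4\<^sup>-\<^sup>n\<^sup>-\<^sup>1)\<close>. The intervals cover \<open>(0,1]\<close>, contain the diagonal
  in their squares, and consecutive ones overlap in an interval of positive length. If a set \<open>A\<close>
  sends no edges to its complement, then on every \<open>J\<^sub>n\<close> either \<open>A\<close> or its complement is null,
  and the overlaps force the same alternative for all \<open>n\<close>; hence \<open>A\<close> is null or conull, so the
  graphon is connected. On the other hand, cutting at \<open>t = 2\<^sup>-\<^sup>n\<close> only separates the part of
  \<open>J\<^sub>n \<times> J\<^sub>n\<close> that sticks out beyond \<open>t\<close>, of measure at most \<open>t \<cdot> 4\<^sup>-\<^sup>n\<^sup>-\<^sup>1\<close>, while both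
  sides have volume at least \<open>4\<^sup>-\<^sup>n\<^sup>-\<^sup>1\<close>; so the Cheeger ratio of this cut is at most \<open>2\<^sup>-\<^sup>n\<close>.\<close>

section \<open>Products of Lebesgue measure\<close>

lemma sigma_finite_lebesgue: "sigma_finite_measure (lebesgue :: 'a::euclidean_space measure)"
proof
  show "\<exists>A::'a set set. countable A \<and> A \<subseteq> sets lebesgue \<and> \<Union>A = space lebesgue
      \<and> (\<forall>a\<in>A. emeasure lebesgue a \<noteq> \<infinity>)"
    by (intro exI[of _ "range (\<lambda>n::nat. box (- real n *\<^sub>R One) (real n *\<^sub>R One))"])
       (auto simp: emeasure_lborel_box_eq UN_box_eq_UNIV)
qed

lemma emeasure_lebesgue_Times:
  fixes A :: "'a::euclidean_space set" and B :: "'b::euclidean_space set"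
  assumes "A \<in> sets lebesgue" "B \<in> sets lebesgue"
  shows "emeasure (lebesgue \<Otimes>\<^sub>M lebesgue) (A \<times> B) = emeasure lebesgue A * emeasure lebesgue B"
  using sigma_finite_measure.emeasure_pair_measure_Times[OF sigma_finite_lebesgue assms] .

lemma measure_lebesgue_Times:
  fixes A :: "'a::euclidean_space set" and B :: "'b::euclidean_space set"
  assumes "A \<in> sets lebesgue" "B \<in> sets lebesgue"
  shows "measure (lebesgue \<Otimes>\<^sub>M lebesgue) (A \<times> B) = measure lebesgue A * measure lebesgue B"
  using emeasure_lebesgue_Times[OF assms] by (simp add: measure_def enn2real_mult)

lemma fmeasurable_lebesgue_Times:
  fixes A :: "'a::euclidean_space set" and B :: "'b::euclidean_space set"
  assumes "A \<in> fmeasurable lebesgue" "B \<in> fmeasurable lebesgue"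
  shows "A \<times> B \<in> fmeasurable (lebesgue \<Otimes>\<^sub>M lebesgue)"
  using assms emeasure_lebesgue_Times[of A B]
  by (auto simp: fmeasurable_def ennreal_mult_less_top)

lemma sets_lebesgue_unit_I [simp]: "unit_I \<in> sets lebesgue"
  by (simp add: unit_I_def)

lemma fmeasurable_subset_unit_I: "A \<in> sets lebesgue \<Longrightarrow> A \<subseteq> unit_I \<Longrightarrow> A \<in> fmeasurable lebesgue"
  by (rule fmeasurableI2[of unit_I]) (auto simp: unit_I_def fmeasurable_def)

lemma measure_unit_I_Diff:
  "A \<in> sets lebesgue \<Longrightarrow> A \<subseteq> unit_I \<Longrightarrow> measure lebesgue (unit_I - A) = 1 - measure lebesgue A"
  by (subst measurable_measure_Diff) (auto simp: unit_I_def)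

lemma graphon_e_nonneg:
  assumes "graphon W" "A \<subseteq> unit_I" "B \<subseteq> unit_I"
  shows "0 \<le> graphon_e W A B"
  unfolding graphon_e_def set_lebesgue_integral_def
  using assms by (intro integral_nonneg_AE AE_I2) (fastforce simp: graphon_def unit_I_def indicator_def)

lemma graphon_e_indicator:
  fixes S :: "(real \<times> real) set"
  shows "graphon_e (\<lambda>x y. indicator S (x, y)) A B = measure (lebesgue \<Otimes>\<^sub>M lebesgue) (A \<times> B \<inter> S)"
proof -
  have "(\<lambda>p. indicator (A \<times> B) p *\<^sub>R (indicator S (fst p, snd p) :: real)) = indicator (A \<times> B \<inter> S)"
    by (auto simp: indicator_def fun_eq_iff)
  then show ?thesis
    by (simp add: graphon_e_def set_lebesgue_integral_def space_pair_measure)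
qed

lemma graphon_e_indicator_ge_rectangle:
  fixes S :: "(real \<times> real) set"
  assumes "S \<in> sets (lebesgue \<Otimes>\<^sub>M lebesgue)" "A \<in> fmeasurable lebesgue" "B \<in> fmeasurable lebesgue"
    and "C \<in> sets lebesgue" "D \<in> sets lebesgue" "C \<times> D \<subseteq> A \<times> B \<inter> S"
  shows "measure lebesgue C * measure lebesgue D \<le> graphon_e (\<lambda>x y. indicator S (x, y)) A B"
  unfolding graphon_e_indicator measure_lebesgue_Times[OF assms(4,5), symmetric]
proof (rule measure_mono_fmeasurable)
  show "A \<times> B \<inter> S \<in> fmeasurable (lebesgue \<Otimes>\<^sub>M lebesgue)"
    using assms by (intro fmeasurableI2[OF fmeasurable_lebesgue_Times[OF assms(2,3)]]) auto
qed (use assms in auto)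

lemma graphon_e_indicator_le_rectangle:
  fixes S :: "(real \<times> real) set"
  assumes "S \<in> sets (lebesgue \<Otimes>\<^sub>M lebesgue)" "A \<in> sets lebesgue" "B \<in> sets lebesgue"
    and "C \<in> fmeasurable lebesgue" "D \<in> fmeasurable lebesgue" "A \<times> B \<inter> S \<subseteq> C \<times> D"
  shows "graphon_e (\<lambda>x y. indicator S (x, y)) A B \<le> measure lebesgue C * measure lebesgue D"
  unfolding graphon_e_indicator
    measure_lebesgue_Times[OF fmeasurableD[OF assms(4)] fmeasurableD[OF assms(5)], symmetric]
  using assms by (intro measure_mono_fmeasurable fmeasurable_lebesgue_Times) auto

section \<open>Connectedness of indicator graphons along a chain of squares\<close>

lemma measure_Int_chain_eq_0:
  fixes J :: "nat \<Rightarrow> 'a::euclidean_space set"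
  assumes J: "\<And>n. J n \<in> fmeasurable lebesgue"
    and overlap: "\<And>n. 0 < measure lebesgue (J n \<inter> J (Suc n))"
    and XY: "X \<in> sets lebesgue" "Y \<in> sets lebesgue" "\<And>n. J n \<inter> J (Suc n) \<subseteq> X \<union> Y"
    and alternative: "\<And>n. measure lebesgue (X \<inter> J n) = 0 \<or> measure lebesgue (Y \<inter> J n) = 0"
    and start: "measure lebesgue (Y \<inter> J 0) = 0"
  shows "measure lebesgue (Y \<inter> J n) = 0"
proof (induction n)
  case 0
  show ?case by (rule start)
next
  case (Suc n)
  define K where "K = J n \<inter> J (Suc n)"
  have K: "K \<in> sets lebesgue" "K \<subseteq> J n" "K \<subseteq> J (Suc n)"
    using fmeasurableD[OF J[of n]] fmeasurableD[OF J[of "Suc n"]] unfolding K_def by auto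
  have fm_J: "Z \<inter> J m \<in> fmeasurable lebesgue" if "Z \<in> sets lebesgue" for Z m
    using that fmeasurableD[OF J[of m]] by (intro fmeasurableI2[OF J[of m]]) auto
  have fm_K: "Z \<inter> K \<in> fmeasurable lebesgue" if "Z \<in> sets lebesgue" for Z
    using that K by (intro fmeasurableI2[OF fm_J[OF that, of n]]) auto
  have "measure lebesgue (Y \<inter> K) \<le> measure lebesgue (Y \<inter> J n)"
    using XY K by (intro measure_mono_fmeasurable fm_J) auto
  then have Y_K: "measure lebesgue (Y \<inter> K) = 0"
    using Suc.IH by (simp add: measure_le_0_iff)
  have "measure lebesgue K \<le> measure lebesgue (X \<inter> K \<union> Y \<inter> K)"
    using XY K by (intro measure_mono_fmeasurable fmeasurable.Un fm_K) (auto simp: K_def)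
  also have "\<dots> \<le> measure lebesgue (X \<inter> K) + measure lebesgue (Y \<inter> K)"
    using XY K by (intro measure_Un_le) auto
  also have "\<dots> \<le> measure lebesgue (X \<inter> J (Suc n))"
    using XY K Y_K by (simp, intro measure_mono_fmeasurable fm_J) auto
  finally have "0 < measure lebesgue (X \<inter> J (Suc n))"
    using overlap[of n] unfolding K_def by linarith
  then show ?case using alternative[of "Suc n"] by simp
qed

lemma graphon_connected_indicatorI:
  fixes S :: "(real \<times> real) set" and J :: "nat \<Rightarrow> real set"
  assumes S: "S \<in> sets (lebesgue \<Otimes>\<^sub>M lebesgue)" "\<And>n. J n \<times> J n \<subseteq> S"
    and J: "\<And>n. J n \<in> fmeasurable lebesgue"
    and overlap: "\<And>n. 0 < measure lebesgue (J n \<inter> J (Suc n))" "\<And>n. J n \<inter> J (Suc n) \<subseteq> unit_I"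
    and cover: "unit_I - (\<Union>n. J n) \<in> null_sets lebesgue"
  shows "graphon_connected (\<lambda>x y. indicator S (x, y))"
  unfolding graphon_connected_def
proof (intro allI impI notI)
  fix A assume A: "proper_subset_I A" and no_cut: "graphon_e (\<lambda>x y. indicator S (x, y)) A (unit_I - A) = 0"
  define B where "B = unit_I - A"
  have A_sets: "A \<in> sets lebesgue" "A \<subseteq> unit_I" and B_sets: "B \<in> sets lebesgue" "B \<subseteq> unit_I"
    using A unfolding proper_subset_I_def B_def by auto
  have alternative: "measure lebesgue (A \<inter> J n) = 0 \<or> measure lebesgue (B \<inter> J n) = 0" for n
  proof -
    have "measure lebesgue (A \<inter> J n) * measure lebesgue (B \<inter> J n)
        \<le> graphon_e (\<lambda>x y. indicator S (x, y)) A B"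
      using A_sets B_sets S(1) fmeasurableD[OF J[of n]]
      by (intro graphon_e_indicator_ge_rectangle fmeasurable_subset_unit_I)
        (auto intro: subsetD[OF S(2)[of n]])
    then show ?thesis
      using no_cut unfolding B_def by (auto simp: mult_le_0_iff measure_le_0_iff)
  qed
  have null_side: "measure lebesgue Y = 0"
    if XY: "X \<in> sets lebesgue" "Y \<in> sets lebesgue" "Y \<subseteq> unit_I" "unit_I \<subseteq> X \<union> Y"
      and alt: "\<And>n. measure lebesgue (X \<inter> J n) = 0 \<or> measure lebesgue (Y \<inter> J n) = 0"
      and start: "measure lebesgue (Y \<inter> J 0) = 0" for X Y
  proof -
    have "J n \<inter> J (Suc n) \<subseteq> X \<union> Y" for n
      using overlap(2) XY(4) by blast
    then have Y_J: "measure lebesgue (Y \<inter> J n) = 0" for n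
      by (rule measure_Int_chain_eq_0[OF J overlap(1) XY(1,2) _ alt start])
    have "Y \<inter> J n \<in> null_sets lebesgue" for n
    proof -
      have "Y \<inter> J n \<in> fmeasurable lebesgue"
        using XY fmeasurableD[OF J[of n]] by (intro fmeasurableI2[OF J[of n]]) auto
      then show ?thesis
        using Y_J[of n] by (simp add: emeasure_eq_measure2 null_setsI)
    qed
    then have "(unit_I - (\<Union>n. J n)) \<union> (\<Union>n. Y \<inter> J n) \<in> null_sets lebesgue"
      by (intro null_sets.Un cover null_sets_UN)
    moreover have "Y \<subseteq> (unit_I - (\<Union>n. J n)) \<union> (\<Union>n. Y \<inter> J n)"
      using XY by blast
    ultimately have "Y \<in> null_sets lebesgue"
      by (rule null_sets_subset[OF _ XY(2)])
    then show ?thesis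
      by (rule measure_eq_0_null_sets)
  qed
  show False
  proof (cases "measure lebesgue (B \<inter> J 0) = 0")
    case True
    have "measure lebesgue B = 0"
      by (rule null_side[OF A_sets(1) B_sets _ alternative True]) (auto simp: B_def)
    then show False using A measure_unit_I_Diff[OF A_sets]
      unfolding B_def proper_subset_I_def by simp
  next
    case False
    then have "measure lebesgue (A \<inter> J 0) = 0"
      using alternative[of 0] by simp
    moreover have "measure lebesgue (B \<inter> J n) = 0 \<or> measure lebesgue (A \<inter> J n) = 0" for n
      using alternative[of n] by blast
    ultimately have "measure lebesgue A = 0"
      using null_side[OF B_sets(1) A_sets] by (auto simp: B_def)
    then show False using A unfolding proper_subset_I_def by simp
  qed
qed

definition cheeger_ratio :: "(real \<Rightarrow> real \<Rightarrow> real) \<Rightarrow> real set \<Rightarrow> real" where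
  "cheeger_ratio W A =
     graphon_e W A (unit_I - A) / min (graphon_vol W A) (graphon_vol W (unit_I - A))"

lemma cheeger_eq_0I:
  assumes "graphon W"
    and small: "\<And>\<epsilon>. 0 < \<epsilon> \<Longrightarrow> \<exists>A. proper_subset_I A \<and> cheeger_ratio W A \<le> \<epsilon>"
  shows "cheeger W = 0"
proof -
  let ?R = "cheeger_ratio W ` Collect proper_subset_I"
  have cheeger_W: "cheeger W = Inf ?R"
    unfolding cheeger_def cheeger_ratio_def by (simp add: setcompr_eq_image)
  have nonneg: "0 \<le> cheeger_ratio W A" if "proper_subset_I A" for A
    using that assms(1) unfolding cheeger_ratio_def graphon_vol_def proper_subset_I_def
    by (intro divide_nonneg_nonneg min.boundedI graphon_e_nonneg) auto
  have "?R \<noteq> {}"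
    using small[of 1] by auto
  then have "0 \<le> Inf ?R"
    using nonneg by (intro cInf_greatest) auto
  moreover have "Inf ?R \<le> 0"
  proof (rule field_le_epsilon)
    fix \<epsilon> :: real assume "0 < \<epsilon>"
    then obtain A where "proper_subset_I A" "cheeger_ratio W A \<le> \<epsilon>"
      using small by blast
    moreover have "bdd_below ?R"
      using nonneg by (intro bdd_belowI2) auto
    ultimately show "Inf ?R \<le> 0 + \<epsilon>"
      by (intro cInf_lower2[of "cheeger_ratio W A"]) auto
  qed
  ultimately show ?thesis
    unfolding cheeger_W by simp
qed

section \<open>A chain of squares along the diagonal\<close>

definition link :: "nat \<Rightarrow> real set" where
  "link n = {(1/2)^Suc n <..< (1/2)^n + (1/4)^Suc n}"

definition square_chain :: "(real \<times> real) set" where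
  "square_chain = (\<Union>n. link n \<times> link n)"

abbreviation chain_graphon :: "real \<Rightarrow> real \<Rightarrow> real" where
  "chain_graphon \<equiv> \<lambda>x y. indicator square_chain (x, y)"

lemma fmeasurable_link: "link n \<in> fmeasurable lebesgue"
  by (simp add: link_def fmeasurable_def)

lemma link_Int_Suc:
  "link n \<inter> link (Suc n) = {(1/2)^Suc n <..< (1/2)^Suc n + (1/4)^Suc (Suc n)}"
proof -
  have "(1/2::real)^Suc (Suc n) \<le> (1/2)^Suc n" "(1/2::real)^Suc n \<le> (1/2)^n"
    "(1/4::real)^Suc (Suc n) \<le> (1/4)^Suc n"
    by (intro power_decreasing; simp)+
  then have "(1/2::real)^Suc (Suc n) \<le> (1/2)^Suc n"
    "(1/2::real)^Suc n + (1/4)^Suc (Suc n) \<le> (1/2)^n + (1/4)^Suc n"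
    by linarith+
  then show ?thesis
    unfolding link_def Int_greaterThanLessThan by (simp only: max_absorb1 min_absorb2)
qed

lemma link_cover:
  assumes "0 < x" "x \<le> 1"
  shows "\<exists>n. x \<in> link n"
proof -
  define m where "m = (LEAST n. (1/2::real)^Suc n < x)"
  obtain n where "(1/2::real)^n < x"
    using real_arch_pow_inv[OF assms(1), of "1/2"] by auto
  moreover have "(1/2::real)^Suc n \<le> (1/2)^n"
    by simp
  ultimately have "(1/2::real)^Suc n < x"
    by linarith
  then have lower: "(1/2::real)^Suc m < x"
    unfolding m_def by (rule LeastI)
  have "x \<le> (1/2)^m"
  proof (cases m)
    case (Suc k)
    then have "\<not> (1/2::real)^Suc k < x"
      using not_less_Least[of k "\<lambda>n. (1/2::real)^Suc n < x"] unfolding m_def by simp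
    then show ?thesis using Suc by simp
  qed (use assms in simp)
  moreover have "(0::real) < (1/4)^Suc m"
    by simp
  ultimately have "x < (1/2)^m + (1/4)^Suc m"
    by linarith
  with lower have "x \<in> link m"
    unfolding link_def greaterThanLessThan_iff by (rule conjI)
  then show ?thesis ..
qed

lemma open_square_chain: "open square_chain"
  unfolding square_chain_def link_def by (intro open_UN ballI open_Times) auto

lemma sets_square_chain: "square_chain \<in> sets (lebesgue \<Otimes>\<^sub>M lebesgue)"
  unfolding square_chain_def by (intro sets.countable_UN pair_measureI) (auto simp: link_def)

lemma graphon_chain_graphon: "graphon chain_graphon"
proof -
  have "(\<lambda>p. chain_graphon (fst p) (snd p)) = indicator square_chain"
    by (simp add: fun_eq_iff)
  moreover have "(x, y) \<in> square_chain \<longleftrightarrow> (y, x) \<in> square_chain" for x y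
    unfolding square_chain_def by auto
  ultimately show ?thesis
    using measurable_restrict_space1[OF borel_measurable_indicator[OF sets_square_chain]]
    by (auto simp: graphon_def unit_I_def indicator_def)
qed

lemma graphon_connected_chain_graphon: "graphon_connected chain_graphon"
proof (rule graphon_connected_indicatorI[OF sets_square_chain _ fmeasurable_link])
  show "link n \<times> link n \<subseteq> square_chain" for n
    unfolding square_chain_def by blast
  show "0 < measure lebesgue (link n \<inter> link (Suc n))" for n
    unfolding link_Int_Suc by simp
  show "link n \<inter> link (Suc n) \<subseteq> unit_I" for n
  proof
    fix x assume "x \<in> link n \<inter> link (Suc n)"
    then have x: "(1/2)^Suc n < x" "x < (1/2)^Suc n + (1/4)^Suc (Suc n)"
      unfolding link_Int_Suc greaterThanLessThan_iff by auto
    have "(1/2::real)^n \<le> 1" "(1/4::real)^n \<le> 1"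
      by (simp_all add: power_le_one)
    then have "(1/2::real)^Suc n \<le> 1/2" "(1/4::real)^Suc (Suc n) \<le> 1/4"
      by simp_all
    moreover have "(0::real) \<le> (1/2)^Suc n"
      by (rule zero_le_power) simp
    ultimately show "x \<in> unit_I"
      unfolding unit_I_def atLeastAtMost_iff using x by linarith
  qed
  have "unit_I - (\<Union>n. link n) \<subseteq> {0}"
  proof
    fix x assume x: "x \<in> unit_I - (\<Union>n. link n)"
    show "x \<in> {0}"
    proof (rule ccontr)
      assume "x \<notin> {0}"
      then have "0 < x" "x \<le> 1"
        using x by (auto simp: unit_I_def)
      then show False
        using link_cover x by blast
    qed
  qed
  moreover have "unit_I - (\<Union>n. link n) \<in> sets lebesgue"
    using fmeasurableD[OF fmeasurable_link] by (auto intro!: sets.Diff sets.countable_UN)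
  ultimately show "unit_I - (\<Union>n. link n) \<in> null_sets lebesgue"
    using null_sets_subset[of "{0}" lebesgue "unit_I - (\<Union>n. link n)"] by simp
qed

lemma square_chain_cut_subset:
  fixes n :: nat
  defines "t \<equiv> (1/2::real)^n"
  shows "{0..t} \<times> (unit_I - {0..t}) \<inter> square_chain \<subseteq> {0..t} \<times> {t<..<t + (1/4)^Suc n}"
proof safe
  fix x y assume x: "x \<in> {0..t}" and y: "y \<in> unit_I" "y \<notin> {0..t}"
    and "(x, y) \<in> square_chain"
  then obtain k where k: "x \<in> link k" "y \<in> link k"
    unfolding square_chain_def by auto
  have "0 \<le> t"
    unfolding t_def by simp
  then have "t < y"
    using y by (auto simp: unit_I_def)
  have "n \<le> k"
  proof (rule ccontr)
    assume "\<not> n \<le> k"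
    then have "(1/2::real)^n \<le> (1/2)^Suc k"
      by (intro power_decreasing) auto
    then show False
      using k(1) x unfolding link_def t_def by auto
  qed
  then have "(1/2::real)^k \<le> t" "(1/4::real)^Suc k \<le> (1/4)^Suc n"
    unfolding t_def by (auto intro!: power_decreasing)
  moreover have "y < (1/2)^k + (1/4)^Suc k"
    using k(2) unfolding link_def by (simp only: greaterThanLessThan_iff)
  ultimately show "y \<in> {t<..<t + (1/4)^Suc n}"
    using \<open>t < y\<close> unfolding greaterThanLessThan_iff by linarith
qed

lemma cheeger_ratio_chain_graphon_le:
  assumes "1 \<le> n"
  shows "cheeger_ratio chain_graphon {0..(1/2)^n} \<le> (1/2)^n"
proof -
  define t :: real where "t = (1/2)^n"
  define \<epsilon> :: real where "\<epsilon> = (1/4)^Suc n"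
  have t: "0 < t" "t \<le> 1/2"
    using power_decreasing[OF assms, of "1/2::real"] unfolding t_def by auto
  have \<epsilon>_pos: "0 < \<epsilon>"
    unfolding \<epsilon>_def by simp
  have \<epsilon>_eq: "\<epsilon> = (t/2) * (t/2)"
    unfolding \<epsilon>_def t_def by (simp add: power_mult_distrib[symmetric])
  have B_eq: "unit_I - {0..t} = {t<..1}"
    using t by (auto simp: unit_I_def)
  have fm_A: "{0..t} \<in> fmeasurable lebesgue"
    using t by (intro fmeasurable_subset_unit_I) (auto simp: unit_I_def)
  have sets_B: "unit_I - {0..t} \<in> sets lebesgue"
    by (simp add: B_eq)
  have "graphon_e chain_graphon {0..t} (unit_I - {0..t})
      \<le> measure lebesgue {0..t} * measure lebesgue {t<..<t + \<epsilon>}"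
    by (rule graphon_e_indicator_le_rectangle[OF sets_square_chain fmeasurableD[OF fm_A] sets_B
        fm_A _ square_chain_cut_subset[of n, folded t_def \<epsilon>_def]])
      (use \<epsilon>_pos in \<open>simp add: fmeasurable_def\<close>)
  then have cut: "graphon_e chain_graphon {0..t} (unit_I - {0..t}) \<le> t * \<epsilon>"
    using t \<epsilon>_pos by simp
  have "link n = {t/2<..<t + \<epsilon>}"
    unfolding link_def t_def \<epsilon>_def by simp
  then have "{t/2<..<t} \<subseteq> link n"
    using \<epsilon>_pos by auto
  then have "{t/2<..<t} \<times> {t/2<..<t} \<subseteq> {0..t} \<times> unit_I \<inter> square_chain"
    using t unfolding square_chain_def by (auto simp: unit_I_def)
  then have "measure lebesgue {t/2<..<t} * measure lebesgue {t/2<..<t} \<le> graphon_vol chain_graphon {0..t}"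
    unfolding graphon_vol_def using fm_A
    by (intro graphon_e_indicator_ge_rectangle sets_square_chain) (auto simp: unit_I_def fmeasurable_def)
  then have vol_A: "\<epsilon> \<le> graphon_vol chain_graphon {0..t}"
    using t \<epsilon>_eq by simp
  have "{1/2<..<1} \<times> {1/2<..<1} \<subseteq> (unit_I - {0..t}) \<times> unit_I \<inter> square_chain"
    using t unfolding square_chain_def link_def B_eq by (auto simp: unit_I_def intro!: exI[of _ 0])
  then have "measure lebesgue {1/2<..<1::real} * measure lebesgue {1/2<..<1::real}
      \<le> graphon_vol chain_graphon (unit_I - {0..t})"
    unfolding graphon_vol_def
    by (intro graphon_e_indicator_ge_rectangle sets_square_chain fmeasurable_subset_unit_I sets_B) auto
  moreover have "t/2 * (t/2) \<le> 1/2 * (1/2)"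
    using t by (intro mult_mono) auto
  ultimately have vol_B: "\<epsilon> \<le> graphon_vol chain_graphon (unit_I - {0..t})"
    unfolding \<epsilon>_eq by simp
  have "cheeger_ratio chain_graphon {0..t} \<le> (t * \<epsilon>) / \<epsilon>"
    unfolding cheeger_ratio_def using cut vol_A vol_B t \<epsilon>_pos
    by (intro frac_le) auto
  then show ?thesis
    using \<epsilon>_pos unfolding t_def by simp
qed

lemma cheeger_chain_graphon: "cheeger chain_graphon = 0"
proof (rule cheeger_eq_0I[OF graphon_chain_graphon])
  fix \<epsilon> :: real assume "0 < \<epsilon>"
  then obtain n where n: "(1/2::real)^n < \<epsilon>"
    using real_arch_pow_inv[of \<epsilon> "1/2"] by auto
  define A where "A = {0..(1/2::real)^Suc n}"
  have "(1/2::real)^Suc n \<le> (1/2)^n" "(1/2::real)^Suc n \<le> 1/2"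
    by (simp_all add: power_le_one)
  then have "proper_subset_I A"
    unfolding proper_subset_I_def A_def by (auto simp: unit_I_def)
  moreover have "cheeger_ratio chain_graphon A \<le> \<epsilon>"
    using cheeger_ratio_chain_graphon_le[of "Suc n"] n \<open>(1/2::real)^Suc n \<le> (1/2)^n\<close>
    unfolding A_def by linarith
  ultimately show "\<exists>A. proper_subset_I A \<and> cheeger_ratio chain_graphon A \<le> \<epsilon>"
    by blast
qed

theorem mainTheorem18:
  shows "\<exists>W. graphon W \<and> graphon_connected W \<and> cheeger W = 0
    \<and> (\<forall>x\<in>unit_I. \<forall>y\<in>unit_I. W x y \<in> {0, 1})
    \<and> (\<exists>U. open U \<and> U \<subseteq> {0<..<1} \<times> {0<..<1}
          \<and> {(x, x) | x::real. 0 < x \<and> x < 1} \<subseteq> U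
          \<and> (\<forall>(x, y)\<in>U. W x y = 1))"
proof (intro exI[of _ chain_graphon] conjI exI[of _ "square_chain \<inter> {0<..<1} \<times> {0<..<1}"])
  let ?U = "square_chain \<inter> {0<..<1} \<times> {0<..<1::real}"
  show "open ?U"
    by (intro open_Int open_square_chain open_Times) auto
  show "{(x, x) | x::real. 0 < x \<and> x < 1} \<subseteq> ?U"
    using link_cover unfolding square_chain_def by fastforce
  show "\<forall>x\<in>unit_I. \<forall>y\<in>unit_I. chain_graphon x y \<in> {0, 1}"
    by (simp add: indicator_def)
qed (auto simp: graphon_chain_graphon graphon_connected_chain_graphon cheeger_chain_graphon)

end
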